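(* Let $(X,d)$ be a metric space with $|X|\ge 2$, $a\in X$, and let $\tilde x$ be a sequence of points of $X$ that is $d$-statistically convergent to $a$. Then for every infinite subsequence $\tilde x'$ of $\tilde x$ with $\limsup_{n\to\infty}\frac{|K_{\tilde x'}(n)|}{n}=0$ there exist a sequence $\tilde y$ of points of $X$ and a subsequence $\tilde y'$ of $\tilde y$ such that: (i) $\tilde y$ and $\tilde x$ are statistically equivalent and $K_{\tilde x'}=K_{\tilde y'}$; (ii) $\tilde y$ is $d$-statistically convergent to $a$; (iii) $\tilde y'$ is not $d$-statistically convergent.
   Context: For a subsequence $\tilde z'=(z_{n(k)})$ of a sequence $(z_n)$ (with $(n(k))$ strictly increasing), $K_{\tilde z'}=\{n(k):k\in\mathbb N\}$ and $K_{\tilde z'}(n)=\{m\in K_{\tilde z'}:m\le n\}$. A sequence $(z_k)$ is $d$-statistically convergent to $a$ if for every $\epsilon>0$, $\lim_{n\to\infty}\frac1n|\{k\le n: d(z_k,a)\ge\epsilon\}|=0$, and $d$-statistically convergent if this holds for some $a\in X$; subsequences are regarded as sequences indexed by $k$. A set $M\subseteq\mathbb N$ is statistical dense if $\lim_{n\to\infty}|\{m\in M:m\le n\}|/n=1$; sequences $(x_n),(y_n)$ are statistically equivalent if $x_n=y_n$ for all $n$ in some statistical dense $M$. *)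

theory Defs
  imports "HOL-Analysis.Analysis" "HOL-Library.Liminf_Limsup"
begin

(* Indices range over nat = {0,1,2,...}; "k \<le> n" counts as in the paper. *)

definition stat_conv_to :: "(nat \<Rightarrow> 'a::metric_space) \<Rightarrow> 'a \<Rightarrow> bool" where
  "stat_conv_to z a \<longleftrightarrow>
     (\<forall>\<epsilon>>0. (\<lambda>n. real (card {k. k \<le> n \<and> dist (z k) a \<ge> \<epsilon>}) / real n) \<longlonglongrightarrow> 0)"

definition stat_convergent :: "(nat \<Rightarrow> 'a::metric_space) \<Rightarrow> bool" where
  "stat_convergent z \<longleftrightarrow> (\<exists>a. stat_conv_to z a)"

(* K_{x'} for the subsequence (x (r k))_k is range r; K_{x'}(n) = {m \<in> range r. m \<le> n} *)
definition K_upto :: "(nat \<Rightarrow> nat) \<Rightarrow> nat \<Rightarrow> nat set" where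
  "K_upto r n = {m \<in> range r. m \<le> n}"

definition stat_dense :: "nat set \<Rightarrow> bool" where
  "stat_dense M \<longleftrightarrow> (\<lambda>n. real (card {m \<in> M. m \<le> n}) / real n) \<longlonglongrightarrow> 1"

definition stat_equiv :: "(nat \<Rightarrow> 'a) \<Rightarrow> (nat \<Rightarrow> 'a) \<Rightarrow> bool" where
  "stat_equiv x y \<longleftrightarrow> (\<exists>M. stat_dense M \<and> (\<forall>n\<in>M. x n = y n))"

end

theory Submission
  imports Defs
begin

text \<open>Keep \<open>x\<close> off the subsequence and let the subsequence alternate between \<open>a\<close> and
  some \<open>b \<noteq> a\<close>. Since the index set \<open>K\<close> of the subsequence has density zero, changing \<open>x\<close> on
  \<open>K\<close> preserves statistical equivalence and statistical convergence to \<open>a\<close>, whereas the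
  alternating subsequence stays at distance at least \<open>d(a,b)/2\<close> from any candidate limit on
  half of its indices.\<close>

lemma tendsto_zero_if_limsup_zero:
  fixes f :: "nat \<Rightarrow> real"
  assumes "\<And>n. 0 \<le> f n" and "limsup (\<lambda>n. ereal (f n)) = 0"
  shows "f \<longlonglongrightarrow> 0"
proof (rule limsup_le_liminf_real)
  show "limsup (\<lambda>n. ereal (f n)) \<le> ereal 0"
    using assms(2) by simp
  show "ereal 0 \<le> liminf (\<lambda>n. ereal (f n))"
    using assms(1) by (intro Liminf_bounded always_eventually) auto
qed

lemma card_Compl_atMost:
  "card {m \<in> - A. m \<le> n} + card {m \<in> A. m \<le> (n::nat)} = Suc n"
proof -
  have "{m \<in> - A. m \<le> n} \<union> {m \<in> A. m \<le> n} = {..n}" "{m \<in> - A. m \<le> n} \<inter> {m \<in> A. m \<le> n} = {}"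
    by auto
  then show ?thesis
    using card_Un_disjoint[of "{m \<in> - A. m \<le> n}" "{m \<in> A. m \<le> n}"] by simp
qed

lemma stat_dense_Compl:
  assumes null: "(\<lambda>n. real (card {m \<in> A. m \<le> n}) / real n) \<longlonglongrightarrow> 0"
  shows "stat_dense (- A)"
proof -
  have "\<forall>\<^sub>F n in sequentially. real (card {m \<in> - A. m \<le> n}) / real n =
          (1 + 1 / real n) - real (card {m \<in> A. m \<le> n}) / real n"
    using eventually_gt_at_top[of 0]
  proof eventually_elim
    case (elim n)
    have "real (card {m \<in> - A. m \<le> n}) = real n + 1 - real (card {m \<in> A. m \<le> n})"
      using card_Compl_atMost[of A n] by linarith
    then have "real (card {m \<in> - A. m \<le> n}) / real n =
        real n / real n + 1 / real n - real (card {m \<in> A. m \<le> n}) / real n"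
      by (simp only: diff_divide_distrib add_divide_distrib)
    moreover have "real n / real n = 1"
      using elim by simp
    ultimately show ?case
      by linarith
  qed
  moreover have "(\<lambda>n. (1 + 1 / real n) - real (card {m \<in> A. m \<le> n}) / real n) \<longlonglongrightarrow> (1 + 0) - 0"
    by (intro tendsto_intros null lim_inverse_n')
  ultimately show ?thesis
    unfolding stat_dense_def by (simp add: tendsto_cong)
qed

lemma stat_conv_to_if_eq_off_null_set:
  assumes conv: "stat_conv_to x a"
    and null: "(\<lambda>n. real (card {m \<in> A. m \<le> n}) / real n) \<longlonglongrightarrow> 0"
    and eq: "\<And>m. m \<notin> A \<Longrightarrow> y m = x m"
  shows "stat_conv_to y a"
  unfolding stat_conv_to_def
proof (intro allI impI)
  fix e :: real
  assume "e > 0"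
  define Y where "Y n = card {k. k \<le> n \<and> dist (y k) a \<ge> e}" for n
  define X where "X n = card {k. k \<le> n \<and> dist (x k) a \<ge> e}" for n
  define K where "K n = card {m \<in> A. m \<le> n}" for n
  have YXK: "Y n \<le> X n + K n" for n
  proof -
    have "{k. k \<le> n \<and> dist (y k) a \<ge> e} \<subseteq> {k. k \<le> n \<and> dist (x k) a \<ge> e} \<union> {m \<in> A. m \<le> n}"
      using eq by auto
    then have "Y n \<le> card ({k. k \<le> n \<and> dist (x k) a \<ge> e} \<union> {m \<in> A. m \<le> n})"
      unfolding Y_def by (intro card_mono) auto
    also have "\<dots> \<le> X n + K n"
      unfolding X_def K_def by (rule card_Un_le)
    finally show ?thesis .
  qed
  have upper: "real (Y n) / real n \<le> real (X n) / real n + real (K n) / real n" for n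
  proof -
    have "real (Y n) \<le> real (X n) + real (K n)"
      using YXK[of n] by simp
    then have "real (Y n) / real n \<le> (real (X n) + real (K n)) / real n"
      by (rule divide_right_mono) simp
    then show ?thesis
      by (simp only: add_divide_distrib)
  qed
  have "(\<lambda>n. real (X n) / real n) \<longlonglongrightarrow> 0"
    using conv \<open>e > 0\<close> unfolding stat_conv_to_def X_def by blast
  from tendsto_add[OF this null[folded K_def]]
  have bound_lim: "(\<lambda>n. real (X n) / real n + real (K n) / real n) \<longlonglongrightarrow> 0"
    by simp
  have "(\<lambda>n. real (Y n) / real n) \<longlonglongrightarrow> 0"
    by (rule tendsto_sandwich[OF _ _ tendsto_const bound_lim]) (simp_all add: upper)
  then show "(\<lambda>n. real (card {k. k \<le> n \<and> dist (y k) a \<ge> e}) / real n) \<longlonglongrightarrow> 0"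
    unfolding Y_def .
qed

lemma card_atMost_mod_2_ge:
  assumes "q < 2"
  shows "n div 2 \<le> card {k. k \<le> n \<and> k mod 2 = (q::nat)}"
proof -
  have inj: "inj_on (\<lambda>j. 2 * j + q) {..<n div 2}"
    by (auto simp: inj_on_def)
  have "(\<lambda>j. 2 * j + q) ` {..<n div 2} \<subseteq> {k. k \<le> n \<and> k mod 2 = q}"
    using assms by auto
  then have "card ((\<lambda>j. 2 * j + q) ` {..<n div 2}) \<le> card {k. k \<le> n \<and> k mod 2 = q}"
    by (intro card_mono) auto
  with inj show ?thesis
    by (simp add: card_image)
qed

lemma not_stat_conv_to_if_far_on_residue:
  assumes "e > 0" and "q < 2" and far: "\<And>k. k mod 2 = q \<Longrightarrow> e \<le> dist (z k) c"
  shows "\<not> stat_conv_to z c"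
proof
  assume "stat_conv_to z c"
  define F where "F n = card {k. k \<le> n \<and> dist (z k) c \<ge> e}" for n
  have "(\<lambda>n. real (F n) / real n) \<longlonglongrightarrow> 0"
    using \<open>stat_conv_to z c\<close> \<open>e > 0\<close> unfolding stat_conv_to_def F_def by auto
  then have "\<forall>\<^sub>F n in sequentially. real (F n) / real n < 1/4"
    by (rule order_tendstoD(2)) simp
  then obtain N where N: "\<And>n. n \<ge> N \<Longrightarrow> real (F n) / real n < 1/4"
    by (auto simp: eventually_sequentially)
  define n where "n = N + 2"
  have "n div 2 \<le> card {k. k \<le> n \<and> k mod 2 = q}"
    using card_atMost_mod_2_ge[OF \<open>q < 2\<close>] .
  also have "\<dots> \<le> F n"
    unfolding F_def using far by (intro card_mono) auto
  finally have "real (n div 2) \<le> real (F n)"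
    by simp
  moreover have "real n \<le> 4 * real (n div 2)"
    unfolding n_def by linarith
  moreover have "real (F n) < real n / 4"
    using N[of n] unfolding n_def by (simp add: field_simps)
  ultimately show False
    by linarith
qed

lemma alternating_not_stat_convergent:
  assumes "a \<noteq> b" and "\<And>k. z k = (if even k then a else b)"
  shows "\<not> stat_convergent z"
proof
  assume "stat_convergent z"
  then obtain c where c: "stat_conv_to z c"
    unfolding stat_convergent_def by auto
  define e where "e = dist a b / 2"
  have "e > 0"
    using \<open>a \<noteq> b\<close> by (simp add: e_def)
  have "e \<le> dist a c \<or> e \<le> dist b c"
    using dist_triangle2[of a b c] by (auto simp: e_def)
  then show False
  proof
    assume "e \<le> dist a c"
    then have "\<And>k. k mod 2 = 0 \<Longrightarrow> e \<le> dist (z k) c"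
      using assms(2) by (auto simp: even_iff_mod_2_eq_zero)
    with \<open>e > 0\<close> c show False
      using not_stat_conv_to_if_far_on_residue[of e 0] by auto
  next
    assume "e \<le> dist b c"
    then have "\<And>k. k mod 2 = 1 \<Longrightarrow> e \<le> dist (z k) c"
      using assms(2) by (auto simp: odd_iff_mod_2_eq_one)
    with \<open>e > 0\<close> c show False
      using not_stat_conv_to_if_far_on_residue[of e 1] by auto
  qed
qed

theorem theorem6:
  fixes x :: "nat \<Rightarrow> 'a::metric_space" and a :: 'a and r :: "nat \<Rightarrow> nat"
  assumes two: "\<exists>b::'a. b \<noteq> a"
    and conv: "stat_conv_to x a"
    and sub: "strict_mono r"
    and dens0: "limsup (\<lambda>n. ereal (real (card (K_upto r n)) / real n)) = 0"
  shows "\<exists>(y :: nat \<Rightarrow> 'a) (s :: nat \<Rightarrow> nat). strict_mono s \<and>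
           stat_equiv y x \<and> range r = range s \<and>
           stat_conv_to y a \<and> \<not> stat_convergent (y \<circ> s)"
proof -
  obtain b where "b \<noteq> a"
    using two by auto
  define y where "y m = (if m \<in> range r then if even (inv r m) then a else b else x m)" for m
  have null: "(\<lambda>n. real (card {m \<in> range r. m \<le> n}) / real n) \<longlonglongrightarrow> 0"
    using dens0 by (intro tendsto_zero_if_limsup_zero) (simp_all add: K_upto_def)
  have off_range: "\<And>m. m \<notin> range r \<Longrightarrow> y m = x m"
    by (simp add: y_def)
  have "stat_equiv y x"
    unfolding stat_equiv_def using stat_dense_Compl[OF null] off_range by auto
  moreover have "stat_conv_to y a"
    using conv null off_range by (rule stat_conv_to_if_eq_off_null_set)
  moreover have "\<not> stat_convergent (y \<circ> r)"
    using \<open>b \<noteq> a\<close> strict_mono_imp_inj_on[OF sub]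
    by (intro alternating_not_stat_convergent[of a b]) (auto simp: y_def)
  ultimately show ?thesis
    using sub by blast
qed

end
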